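(* Let $n,k,r$ be integers with $k,r\geq 2$ and $n\geq k+r-1$. If $H$ is a vertex-$k$-maximal $r$-uniform hypergraph on $n$ vertices, then $\overline{\kappa}(H)=\kappa(H)=k$.
   Context: A hypergraph $H=(V,E)$ consists of a finite vertex set $V$ and a set $E$ of non-empty subsets of $V$ (edges). $H$ is $r$-uniform if every edge has exactly $r$ elements. $K_n^r$ denotes the complete $r$-uniform hypergraph on $n$ vertices (all $r$-subsets are edges; no edges if $n<r$). The complement $H^c$ of an $r$-uniform hypergraph $H=(V,E)$ is the $r$-uniform hypergraph on $V$ whose edges are the $r$-subsets of $V$ not in $E$. A subhypergraph of $H$ is $H'=(V',E')$ with $V'\subseteq V$, $E'\subseteq E$ (and edges of $E'$ contained in $V'$). For an $r$-subset $e\in E(H^c)$, $H+e=(V,E\cup\{e\})$. For $Y\subseteq V$, $H[Y]$ is the induced hypergraph with vertex set $Y$ and edges $\{e\in E: e\subseteq Y\}$, and $H-Y=H[V\setminus Y]$. A path is an alternating sequence $v_1,e_1,v_2,\dots,e_s,v_{s+1}$ of distinct vertices and distinct edges with $v_i,v_{i+1}\in e_i$; $H$ is connected if any two vertices are joined by a path. A vertex-cut is a set $X\subseteq V$ with $H-X$ disconnected. The vertex-connectivity $\kappa(H)$ is the minimum size of a vertex-cut if $H$ has one, and $|V(H)|-1$ otherwise. $\overline{\kappa}(H)=\max\{\kappa(H'): H'\text{ a subhypergraph of }H\}$. An $r$-uniform hypergraph $H$ is vertex-$k$-maximal if $\overline{\kappa}(H)\leq k$ but $\overline{\kappa}(H+e)\geq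 k+1$ for every $e\in E(H^c)$. *)

theory Defs
  imports Main
begin

definition hypergraph :: "'a set \<Rightarrow> 'a set set \<Rightarrow> bool" where
  "hypergraph V E \<longleftrightarrow> finite V \<and> (\<forall>e\<in>E. e \<noteq> {} \<and> e \<subseteq> V)"

definition uniform_hg :: "nat \<Rightarrow> 'a set \<Rightarrow> 'a set set \<Rightarrow> bool" where
  "uniform_hg r V E \<longleftrightarrow> hypergraph V E \<and> (\<forall>e\<in>E. card e = r)"

definition is_path :: "'a set \<Rightarrow> 'a set set \<Rightarrow> 'a list \<Rightarrow> 'a set list \<Rightarrow> bool" where
  "is_path V E vs es \<longleftrightarrow> length vs = Suc (length es) \<and> distinct vs \<and> distinct es
     \<and> set vs \<subseteq> V \<and> set es \<subseteq> E
     \<and> (\<forall>i<length es. vs ! i \<in> es ! i \<and> vs ! Suc i \<in> es ! i)"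

definition hg_connected :: "'a set \<Rightarrow> 'a set set \<Rightarrow> bool" where
  "hg_connected V E \<longleftrightarrow>
     (\<forall>u\<in>V. \<forall>v\<in>V. \<exists>vs es. is_path V E vs es \<and> hd vs = u \<and> last vs = v)"

definition induced_edges :: "'a set set \<Rightarrow> 'a set \<Rightarrow> 'a set set" where
  "induced_edges E Y = {e \<in> E. e \<subseteq> Y}"

definition vertex_cut :: "'a set \<Rightarrow> 'a set set \<Rightarrow> 'a set \<Rightarrow> bool" where
  "vertex_cut V E X \<longleftrightarrow> X \<subseteq> V \<and> \<not> hg_connected (V - X) (induced_edges E (V - X))"

definition kappa :: "'a set \<Rightarrow> 'a set set \<Rightarrow> int" where
  "kappa V E = (if \<exists>X. vertex_cut V E X
                then int (Min {card X | X. vertex_cut V E X})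
                else int (card V) - 1)"

definition subhypergraph :: "'a set \<Rightarrow> 'a set set \<Rightarrow> 'a set \<Rightarrow> 'a set set \<Rightarrow> bool" where
  "subhypergraph V' E' V E \<longleftrightarrow> V' \<subseteq> V \<and> E' \<subseteq> E \<and> (\<forall>e\<in>E'. e \<subseteq> V')"

definition kappa_bar :: "'a set \<Rightarrow> 'a set set \<Rightarrow> int" where
  "kappa_bar V E = Max {kappa V' E' | V' E'. subhypergraph V' E' V E}"

definition vertex_k_maximal :: "nat \<Rightarrow> nat \<Rightarrow> 'a set \<Rightarrow> 'a set set \<Rightarrow> bool" where
  "vertex_k_maximal k r V E \<longleftrightarrow>
     kappa_bar V E \<le> int k \<and>
     (\<forall>e. e \<subseteq> V \<and> card e = r \<and> e \<notin> E \<longrightarrow> kappa_bar V (insert e E) \<ge> int k + 1)"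

end

theory Submission
  imports Defs
begin

text \<open>Suppose \<open>X\<close> were a vertex-cut with fewer than \<open>k\<close> vertices, and let \<open>C\<close> be the component
  of \<open>H - X\<close> containing a vertex \<open>u\<close>, with \<open>v\<close> outside \<open>C\<close>. Since \<open>|V - X| \<ge> r\<close> there is an
  \<open>r\<close>-set \<open>e \<subseteq> V - X\<close> through \<open>u\<close> and \<open>v\<close>; it is not an edge, as no edge of \<open>H - X\<close> leaves \<open>C\<close>.
  By maximality \<open>H + e\<close> has a subhypergraph \<open>H'\<close> with \<open>\<kappa>(H') \<ge> k + 1\<close>, and \<open>H'\<close> must contain
  \<open>e\<close>. Then \<open>H'\<close> has at least \<open>k + 2\<close> vertices, so it has a vertex \<open>w \<notin> X \<union> {u, v}\<close>.
  Deleting \<open>X\<close> together with one of \<open>u, v\<close> (the one on the same side of \<open>C\<close> as \<open>w\<close>) destroys \<open>e\<close>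
  and separates \<open>w\<close> from the other one, a cut of \<open>H'\<close> with at most \<open>k\<close> vertices.
  Hence \<open>\<kappa>(H) \<ge> k \<ge> \<kappa>\<^bsub>bar\<^esub>(H) \<ge> \<kappa>(H)\<close>.\<close>

lemma is_path_singleton: "u \<in> V \<Longrightarrow> is_path V E [u] []"
  by (simp add: is_path_def)

lemma is_path_take:
  assumes "is_path V E vs es" "j < length vs"
  shows "is_path V E (take (Suc j) vs) (take j es)"
proof -
  have "j \<le> length es" using assms by (simp add: is_path_def)
  then show ?thesis using assms unfolding is_path_def
    by (auto simp: min_def nth_take dest: in_set_takeD)
qed

lemma is_path_take_snoc:
  assumes p: "is_path V E vs es" and j: "j < length vs"
    and f: "f \<in> E" "vs ! j \<in> f" "f \<notin> set (take j es)"
    and y: "y \<in> f" "y \<in> V" "y \<notin> set (take (Suc j) vs)"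
  shows "is_path V E (take (Suc j) vs @ [y]) (take j es @ [f])"
proof -
  have p': "is_path V E (take (Suc j) vs) (take j es)" by (rule is_path_take[OF p j])
  have len_vs: "length (take (Suc j) vs) = Suc j" using j by simp
  then have len_es: "length (take j es) = j" using p' by (simp add: is_path_def)
  have "(take (Suc j) vs @ [y]) ! i \<in> (take j es @ [f]) ! i \<and>
        (take (Suc j) vs @ [y]) ! Suc i \<in> (take j es @ [f]) ! i"
    if "i < Suc j" for i
  proof (cases "i < j")
    case True
    then show ?thesis using p' len_vs len_es by (simp add: nth_append is_path_def)
  next
    case False
    then have "i = j" using that by simp
    then show ?thesis using len_vs len_es f y j by (simp add: nth_append)
  qed
  then show ?thesis using p' f y len_vs len_es unfolding is_path_def by auto
qed

lemma nth_notin_set_take: "distinct xs \<Longrightarrow> j < length xs \<Longrightarrow> xs ! j \<notin> set (take j xs)"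
  by (auto simp: in_set_conv_nth nth_eq_iff_index_eq)

definition reachable :: "'a set \<Rightarrow> 'a set set \<Rightarrow> 'a \<Rightarrow> 'a set" where
  "reachable V E u = {w \<in> V. \<exists>vs es. is_path V E vs es \<and> hd vs = u \<and> last vs = w}"

lemma reachable_self: "u \<in> V \<Longrightarrow> u \<in> reachable V E u"
  unfolding reachable_def using is_path_singleton by force

lemma reachable_edge_closed:
  assumes edges: "\<forall>g\<in>E. g \<subseteq> V" and g: "g \<in> E" "g \<inter> reachable V E u \<noteq> {}"
  shows "g \<subseteq> reachable V E u"
proof
  fix y assume y: "y \<in> g"
  then have yV: "y \<in> V" using edges g by blast
  obtain x where x: "x \<in> g" "x \<in> reachable V E u" using g by blast
  then obtain vs es where p: "is_path V E vs es" "hd vs = u" "last vs = x"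
    unfolding reachable_def by blast
  have ne: "vs \<noteq> []" and len: "length vs = Suc (length es)"
    using p by (auto simp: is_path_def)
  show "y \<in> reachable V E u"
  proof (cases "y \<in> set vs")
    case True
    then obtain i where i: "i < length vs" "vs ! i = y" by (metis in_set_conv_nth)
    have "last (take (Suc i) vs) = y" using i by (simp add: take_Suc_conv_app_nth)
    then show ?thesis
      unfolding reachable_def using is_path_take[OF p(1) i(1)] p(2) ne yV by auto
  next
    case False
    \<comment> \<open>Branch off along \<open>g\<close> where \<open>g\<close> first occurs on the path, or at its end.\<close>
    have "\<exists>j<length vs. vs ! j \<in> g \<and> g \<notin> set (take j es)"
    proof (cases "g \<in> set es")
      case True
      then obtain j where j: "j < length es" "es ! j = g" by (metis in_set_conv_nth)
      moreover have "distinct es" "\<forall>i<length es. vs ! i \<in> es ! i"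
        using p(1) by (auto simp: is_path_def)
      ultimately have "vs ! j \<in> g" "g \<notin> set (take j es)"
        using nth_notin_set_take[of es j] by auto
      then show ?thesis using j len by (intro exI[of _ j]) auto
    next
      case False
      have "vs ! length es = x" using p(3) len ne by (simp add: last_conv_nth)
      then show ?thesis using False x len by (intro exI[of _ "length es"]) auto
    qed
    then obtain j where j: "j < length vs" "vs ! j \<in> g" "g \<notin> set (take j es)" by blast
    have "y \<notin> set (take (Suc j) vs)" using False by (meson in_set_takeD)
    from is_path_take_snoc[OF p(1) j(1) g(1) j(2,3) y yV this]
    show ?thesis unfolding reachable_def using p(2) ne yV by fastforce
  qed
qed

lemma is_path_in_edge_closed:
  assumes p: "is_path V E vs es" and "hd vs \<in> C"
    and closed: "\<forall>g\<in>E. g \<inter> C \<noteq> {} \<longrightarrow> g \<subseteq> C"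
  shows "set vs \<subseteq> C"
proof -
  have "vs ! i \<in> C" if "i < length vs" for i
    using that
  proof (induction i)
    case 0
    then show ?case using assms(2) by (simp add: hd_conv_nth)
  next
    case (Suc i)
    then have "i < length es" using p by (simp add: is_path_def)
    then have edge: "es ! i \<in> E" "vs ! i \<in> es ! i" "vs ! Suc i \<in> es ! i"
      using p unfolding is_path_def by auto
    have "vs ! i \<in> C" using Suc by simp
    then have "es ! i \<subseteq> C" using closed edge(1,2) by blast
    then show ?case using edge(3) by blast
  qed
  then show ?thesis by (metis in_set_conv_nth subsetI)
qed

lemma not_hg_connected_if_edge_closed:
  assumes "a \<in> V" "a \<in> C" "b \<in> V" "b \<notin> C"
    and closed: "\<forall>g\<in>E. g \<inter> C \<noteq> {} \<longrightarrow> g \<subseteq> C"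
  shows "\<not> hg_connected V E"
proof
  assume "hg_connected V E"
  then obtain vs es where p: "is_path V E vs es" "hd vs = a" "last vs = b"
    using assms unfolding hg_connected_def by blast
  then have "vs \<noteq> []" by (auto simp: is_path_def)
  then show False
    using is_path_in_edge_closed[OF p(1) _ closed] p assms(2,4) last_in_set by fastforce
qed

lemma not_hg_connected_obtain_edge_closed:
  assumes "\<not> hg_connected V E" and "\<forall>g\<in>E. g \<subseteq> V"
  obtains u C v where "u \<in> V" "u \<in> C" "v \<in> V" "v \<notin> C"
    and "\<forall>g\<in>E. g \<inter> C \<noteq> {} \<longrightarrow> g \<subseteq> C"
proof -
  obtain u v where u: "u \<in> V" and v: "v \<in> V" "v \<notin> reachable V E u"
    using assms(1) unfolding hg_connected_def reachable_def by auto
  show ?thesis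
  proof (rule that[OF u reachable_self[OF u] v])
    show "\<forall>g\<in>E. g \<inter> reachable V E u \<noteq> {} \<longrightarrow> g \<subseteq> reachable V E u"
      using reachable_edge_closed[OF assms(2)] by blast
  qed
qed

lemma hg_connected_if_card_le_1:
  assumes "finite V" "card V \<le> 1"
  shows "hg_connected V E"
  unfolding hg_connected_def
proof (intro ballI)
  fix u v assume uv: "u \<in> V" "v \<in> V"
  have "u = v" using card_le_Suc0_iff_eq[OF assms(1)] assms(2) uv by simp
  then show "\<exists>vs es. is_path V E vs es \<and> hd vs = u \<and> last vs = v"
    using is_path_singleton[OF uv(1)] by (intro exI[of _ "[u]"] exI[of _ "[]"]) simp
qed

lemma finite_vertex_cut_cards:
  "finite V \<Longrightarrow> finite {card X | X. vertex_cut V E X}"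
  by (rule finite_subset[of _ "card ` Pow V"]) (auto simp: vertex_cut_def)

lemma kappa_le_card_vertex_cut:
  assumes "finite V" "vertex_cut V E X"
  shows "kappa V E \<le> int (card X)"
proof -
  have "Min {card X | X. vertex_cut V E X} \<le> card X"
    using assms finite_vertex_cut_cards[OF assms(1)] by (intro Min_le) auto
  then show ?thesis using assms unfolding kappa_def by auto
qed

lemma kappa_le_card:
  assumes "finite V"
  shows "kappa V E \<le> int (card V) - 1"
proof (cases "\<exists>X. vertex_cut V E X")
  case True
  then obtain X where X: "vertex_cut V E X" by blast
  then have XV: "X \<subseteq> V" and "\<not> hg_connected (V - X) (induced_edges E (V - X))"
    by (auto simp: vertex_cut_def)
  then have "\<not> card (V - X) \<le> 1" using hg_connected_if_card_le_1 assms by blast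
  then have "card X + 1 \<le> card V"
    using card_Diff_subset[OF finite_subset[OF XV assms] XV] card_mono[OF assms XV] by linarith
  then show ?thesis using kappa_le_card_vertex_cut[OF assms X] by linarith
next
  case False
  then show ?thesis by (simp add: kappa_def)
qed

lemma kappa_geI:
  assumes "finite V" "\<And>X. vertex_cut V E X \<Longrightarrow> m \<le> card X" "m < card V"
  shows "int m \<le> kappa V E"
proof (cases "\<exists>X. vertex_cut V E X")
  case True
  then have "Min {card X | X. vertex_cut V E X} \<in> {card X | X. vertex_cut V E X}"
    using finite_vertex_cut_cards[OF assms(1)] by (intro Min_in) auto
  then show ?thesis using True assms(2) by (auto simp: kappa_def)
next
  case False
  then show ?thesis using assms(3) by (simp add: kappa_def)
qed

lemma finite_kappa_subhypergraphs:
  assumes "finite V"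
  shows "finite {kappa V' E' | V' E'. subhypergraph V' E' V E}"
proof (rule finite_subset)
  show "{kappa V' E' | V' E'. subhypergraph V' E' V E}
        \<subseteq> (\<lambda>(A, B). kappa A B) ` (Pow V \<times> Pow (Pow V))"
    unfolding subhypergraph_def image_iff by force
qed (use assms in simp)

lemma kappa_le_kappa_bar:
  assumes "finite V" "subhypergraph V' E' V E"
  shows "kappa V' E' \<le> kappa_bar V E"
  unfolding kappa_bar_def using assms finite_kappa_subhypergraphs[OF assms(1)]
  by (intro Max_ge) auto

lemma kappa_bar_attained:
  assumes "finite V"
  obtains V' E' where "subhypergraph V' E' V E" "kappa V' E' = kappa_bar V E"
proof -
  have "subhypergraph {} {} V E" by (simp add: subhypergraph_def)
  then have "kappa_bar V E \<in> {kappa V' E' | V' E'. subhypergraph V' E' V E}"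
    unfolding kappa_bar_def using finite_kappa_subhypergraphs[OF assms] by (intro Max_in) auto
  then show ?thesis using that by auto
qed

lemma kappa_bar_insert_attained:
  assumes "finite V" "kappa_bar V E < kappa_bar V (insert e E)"
  obtains V' E' where "subhypergraph V' E' V (insert e E)" "e \<in> E'"
    "kappa V' E' = kappa_bar V (insert e E)"
proof -
  obtain V' E' where sub: "subhypergraph V' E' V (insert e E)"
    and eq: "kappa V' E' = kappa_bar V (insert e E)"
    using kappa_bar_attained[OF assms(1)] by blast
  have "e \<in> E'"
  proof (rule ccontr)
    assume "e \<notin> E'"
    then have "subhypergraph V' E' V E" using sub by (auto simp: subhypergraph_def)
    then show False using kappa_le_kappa_bar[OF assms(1)] assms(2) eq by fastforce
  qed
  then show ?thesis using that sub eq by blast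
qed

lemma obtain_subset_with_card_containing:
  assumes "finite A" "a \<in> A" "b \<in> A" "a \<noteq> b" "2 \<le> r" "r \<le> card A"
  obtains e where "e \<subseteq> A" "card e = r" "a \<in> e" "b \<in> e"
proof -
  have "card (A - {a, b}) = card A - 2" using assms by (simp add: card_Diff_subset)
  then obtain S where S: "S \<subseteq> A - {a, b}" "card S = r - 2"
    using obtain_subset_with_card_n[of "r - 2" "A - {a, b}"] assms(6) by force
  moreover have "finite S" using S(1) assms(1) finite_subset by blast
  moreover have "a \<notin> S" "b \<notin> S" using S(1) by auto
  ultimately have "card (insert a (insert b S)) = r" using assms by simp
  then show ?thesis using that[of "insert a (insert b S)"] S assms by blast
qed

lemma kappa_le_if_crossing_edge:
  assumes sub: "subhypergraph V' E' V (insert e E)" and "e \<in> E'"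
    and fin: "finite V" and XV: "X \<subseteq> V"
    and closed: "\<forall>g\<in>induced_edges E (V - X). g \<inter> C \<noteq> {} \<longrightarrow> g \<subseteq> C"
    and u: "u \<in> e" "u \<in> C" "u \<notin> X" and v: "v \<in> e" "v \<notin> C" "v \<notin> X"
    and big: "3 \<le> card (V' - X)"
  shows "kappa V' E' \<le> int (card X) + 1"
proof -
  have V'V: "V' \<subseteq> V" and E': "E' \<subseteq> insert e E" "\<forall>g\<in>E'. g \<subseteq> V'"
    using sub by (auto simp: subhypergraph_def)
  have finV': "finite V'" using V'V fin finite_subset by blast
  have uV': "u \<in> V'" and vV': "v \<in> V'" using E'(2) \<open>e \<in> E'\<close> u v by auto
  have "card {u, v} \<le> 2" by (simp add: card_insert_if)
  then have "card (V' - X) - 2 \<le> card (V' - X - {u, v})"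
    using diff_card_le_card_Diff[of "{u, v}" "V' - X"] by simp
  then have "V' - X - {u, v} \<noteq> {}" using big by fastforce
  then obtain w where w: "w \<in> V'" "w \<notin> X" "w \<noteq> u" "w \<noteq> v" by blast
  have cut: "vertex_cut V' E' (insert z (X \<inter> V'))"
    if z: "z \<in> e" and a: "a \<in> V' - insert z X" "a \<in> C" and b: "b \<in> V' - insert z X" "b \<notin> C"
    for z a b
  proof -
    let ?Y = "insert z (X \<inter> V')"
    have "\<forall>g\<in>induced_edges E' (V' - ?Y). g \<inter> C \<noteq> {} \<longrightarrow> g \<subseteq> C"
    proof
      fix g assume g: "g \<in> induced_edges E' (V' - ?Y)"
      then have "g \<noteq> e" using z by (auto simp: induced_edges_def)
      then have "g \<in> induced_edges E (V - X)"
        using g E'(1) V'V by (auto simp: induced_edges_def)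
      then show "g \<inter> C \<noteq> {} \<longrightarrow> g \<subseteq> C" using closed by blast
    qed
    then have "\<not> hg_connected (V' - ?Y) (induced_edges E' (V' - ?Y))"
      by (rule not_hg_connected_if_edge_closed[rotated 4]) (use a b in auto)
    moreover have "z \<in> V'" using z E'(2) \<open>e \<in> E'\<close> by blast
    ultimately show ?thesis by (simp add: vertex_cut_def)
  qed
  \<comment> \<open>Delete \<open>X\<close> and whichever of \<open>u, v\<close> lies on the same side of \<open>C\<close> as \<open>w\<close>.\<close>
  obtain z where "vertex_cut V' E' (insert z (X \<inter> V'))"
  proof (cases "w \<in> C")
    case True
    then show ?thesis using that cut[of u w v] u v w vV' by blast
  next
    case False
    then show ?thesis using that cut[of v u w] u v w uV' by blast
  qed
  moreover have "card (insert z (X \<inter> V')) \<le> card X + 1"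
    using card_mono[OF finite_subset[OF XV fin], of "X \<inter> V'"] finV'
    by (simp add: card_insert_if)
  ultimately show ?thesis using kappa_le_card_vertex_cut[OF finV'] by fastforce
qed

lemma vertex_k_maximal_vertex_cut_card_ge:
  assumes fin: "finite V" and max: "vertex_k_maximal k r V E"
    and "2 \<le> r" and size: "k + r - 1 \<le> card V" and cut: "vertex_cut V E X"
  shows "k \<le> card X"
proof (rule ccontr)
  assume "\<not> k \<le> card X"
  then have small: "card X < k" by simp
  have XV: "X \<subseteq> V" and nc: "\<not> hg_connected (V - X) (induced_edges E (V - X))"
    using cut by (auto simp: vertex_cut_def)
  obtain u C v where u: "u \<in> V - X" "u \<in> C" and v: "v \<in> V - X" "v \<notin> C"
    and closed: "\<forall>g\<in>induced_edges E (V - X). g \<inter> C \<noteq> {} \<longrightarrow> g \<subseteq> C"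
    by (rule not_hg_connected_obtain_edge_closed[OF nc]) (auto simp: induced_edges_def)
  have "r \<le> card (V - X)"
    using size small card_Diff_subset[OF finite_subset[OF XV fin] XV] card_mono[OF fin XV]
    by linarith
  then obtain e where e: "e \<subseteq> V - X" "card e = r" "u \<in> e" "v \<in> e"
    using obtain_subset_with_card_containing[of "V - X" u v r] fin u v \<open>2 \<le> r\<close> by blast
  have "e \<notin> E"
  proof
    assume "e \<in> E"
    then have "e \<in> induced_edges E (V - X)" using e(1) by (simp add: induced_edges_def)
    then show False using closed e u v by blast
  qed
  then have raised: "int k + 1 \<le> kappa_bar V (insert e E)" "kappa_bar V E \<le> int k"
    using max e(1,2) by (auto simp: vertex_k_maximal_def)
  obtain V' E' where sub: "subhypergraph V' E' V (insert e E)" "e \<in> E'"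
    and eq: "kappa V' E' = kappa_bar V (insert e E)"
    by (rule kappa_bar_insert_attained[OF fin, of E e]) (use raised in linarith)
  have finV': "finite V'" using sub fin finite_subset by (auto simp: subhypergraph_def)
  have "k + 2 \<le> card V'" using kappa_le_card[OF finV', of E'] raised eq by linarith
  moreover have "card (V' - X) = card V' - card (V' \<inter> X)"
    using finV' by (simp add: card_Diff_subset_Int)
  moreover have "card (V' \<inter> X) \<le> card X"
    by (rule card_mono[OF finite_subset[OF XV fin]]) blast
  ultimately have "3 \<le> card (V' - X)" using small by linarith
  then have "kappa V' E' \<le> int (card X) + 1"
    using u(1) v(1)
    by (intro kappa_le_if_crossing_edge[OF sub fin XV closed e(3) u(2) _ e(4) v(2)]) auto
  then show False using raised eq small by linarith
qed

theorem lemma2p1: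
  fixes V :: "'a set" and E :: "'a set set" and n k r :: nat
  assumes "k \<ge> 2" and "r \<ge> 2" and "n \<ge> k + r - 1"
    and "uniform_hg r V E" and "card V = n"
    and "vertex_k_maximal k r V E"
  shows "kappa_bar V E = int k \<and> kappa V E = int k"
proof -
  have fin: "finite V" and edges: "\<forall>e\<in>E. e \<subseteq> V"
    using assms(4) by (auto simp: uniform_hg_def hypergraph_def)
  have "int k \<le> kappa V E"
  proof (rule kappa_geI[OF fin])
    show "k \<le> card X" if "vertex_cut V E X" for X
      using vertex_k_maximal_vertex_cut_card_ge[OF fin assms(6) assms(2)] that assms(3,5)
      by blast
    show "k < card V" using assms(2,3,5) by linarith
  qed
  moreover have "kappa V E \<le> kappa_bar V E"
    using kappa_le_kappa_bar[OF fin] edges by (simp add: subhypergraph_def)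
  moreover have "kappa_bar V E \<le> int k"
    using assms(6) by (simp add: vertex_k_maximal_def)
  ultimately show ?thesis by linarith
qed

end
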